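(* (1) Let $X=(X,\mathcal O(X))$ be a locally super-compact $L$-sober space. Then $\Sigma_L\Omega_LX=(X,\mathcal O(X))$, i.e., the Scott $L$-topology of the specialization $L$-order of $X$ equals $\mathcal O(X)$. (2) Let $(P,e)$ be a continuous $L$-dcpo. Then $\Omega_L\Sigma_L(P,e)=(P,e)$, i.e., the specialization $L$-order of the Scott $L$-topology $\sigma_L(P)$ equals $e$.
   Context: $L$ is a frame with implication $\to$. $L$-subsets: maps to $L$; nonempty: $\bigvee A=1$; ${\rm sub}_X(A,B)=\bigwedge_xA(x)\to B(x)$. $L$-topology: $\mathcal O(X)\subseteq L^X$ closed under finite meets and arbitrary joins containing all constants $a_X$; interior $A^\circ$ is the join of open sets below $A$. Super-compact: nonempty $A$ with ${\rm sub}_X(A,\bigvee_iV_i)=\bigvee_i{\rm sub}_X(A,V_i)$ for all families of open $V_i$; ${\rm SC}(X)$ their set. Locally super-compact: every open $A=\bigvee_{B\in{\rm SC}(X)}{\rm sub}_X(B,A)\wedge B^\circ$. A point of $\mathcal O(X)$: $p:\mathcal O(X)\to L$ preserving binary meets, arbitrary joins, with $p(\lambda_X)=\lambda$; $[x](A)=A(x)$; $L$-sober: $x\mapsto[x]$ bijective onto the points. For a $T_0$ space, $\Omega_LX$ is $X$ with the specialization $L$-order $e(x,y)=\bigwedge_{A\in\mathcal O(X)}A(x)\to A(y)$. For an $L$-ordered set $(P,e)$ ($e(x,x)=1$, $e(x,y)\wedge e(y,z)\le e(x,z)$, $e(x,y)\wedge e(y,x)=1\Rightarrow x=y$): ${\downarrow}y(x)=e(x,y)$;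 $\sqcup A=x$ iff $e(x,y)={\rm sub}_P(A,{\downarrow}y)$ for all $y$; directed: nonempty and $D(x)\wedge D(y)\le\bigvee_zD(z)\wedge e(x,z)\wedge e(y,z)$; ideal: directed lower set; $L$-dcpo: all directed $L$-subsets have suprema; ${\Downarrow}x(y)=\bigwedge\{e(x,\sqcup I)\to I(y):I\text{ ideal with a supremum}\}$; continuous $L$-dcpo: $L$-dcpo with each ${\Downarrow}x$ directed and $\sqcup{\Downarrow}x=x$. Scott $L$-topology $\sigma_L(P)$: upper sets $A$ ($A(x)\wedge e(x,y)\le A(y)$) with $A(\sqcup D)=\bigvee_xA(x)\wedge D(x)$ for every directed $D$ having a supremum; $\Sigma_LP=(P,\sigma_L(P))$. *)

theory Defs
  imports Main
begin

text \<open>The frame L is a complete lattice type 'l together with an implication imp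
  satisfying the residuation law (which makes 'l a frame / complete Heyting algebra).\<close>

definition is_frame_impl :: "('l::complete_lattice \<Rightarrow> 'l \<Rightarrow> 'l) \<Rightarrow> bool" where
  "is_frame_impl imp \<longleftrightarrow> (\<forall>a b c. c \<le> imp a b \<longleftrightarrow> inf c a \<le> b)"

definition subL :: "('l::complete_lattice \<Rightarrow> 'l \<Rightarrow> 'l) \<Rightarrow> ('a \<Rightarrow> 'l) \<Rightarrow> ('a \<Rightarrow> 'l) \<Rightarrow> 'l" where
  "subL imp A B = (INF x. imp (A x) (B x))"

definition nonemptyL :: "('a \<Rightarrow> 'l::complete_lattice) \<Rightarrow> bool" where
  "nonemptyL A \<longleftrightarrow> (SUP x. A x) = top"

definition Ltopology :: "('a \<Rightarrow> 'l::complete_lattice) set \<Rightarrow> bool" where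
  "Ltopology T \<longleftrightarrow> (\<forall>U\<in>T. \<forall>V\<in>T. inf U V \<in> T) \<and> (\<forall>\<U>\<subseteq>T. Sup \<U> \<in> T)
      \<and> (\<forall>c. (\<lambda>_. c) \<in> T)"

definition interiorL :: "('a \<Rightarrow> 'l::complete_lattice) set \<Rightarrow> ('a \<Rightarrow> 'l) \<Rightarrow> ('a \<Rightarrow> 'l)" where
  "interiorL T A = Sup {U\<in>T. U \<le> A}"

definition super_compact :: "('l::complete_lattice \<Rightarrow> 'l \<Rightarrow> 'l) \<Rightarrow> ('a \<Rightarrow> 'l) set \<Rightarrow> ('a \<Rightarrow> 'l) \<Rightarrow> bool" where
  "super_compact imp T A \<longleftrightarrow> nonemptyL A \<and>
     (\<forall>\<V>\<subseteq>T. subL imp A (Sup \<V>) = (SUP V\<in>\<V>. subL imp A V))"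

definition SC :: "('l::complete_lattice \<Rightarrow> 'l \<Rightarrow> 'l) \<Rightarrow> ('a \<Rightarrow> 'l) set \<Rightarrow> ('a \<Rightarrow> 'l) set" where
  "SC imp T = {A. super_compact imp T A}"

definition locally_super_compact :: "('l::complete_lattice \<Rightarrow> 'l \<Rightarrow> 'l) \<Rightarrow> ('a \<Rightarrow> 'l) set \<Rightarrow> bool" where
  "locally_super_compact imp T \<longleftrightarrow>
     (\<forall>A\<in>T. A = (SUP B\<in>SC imp T. (\<lambda>x. inf (subL imp B A) (interiorL T B x))))"

text \<open>A point of T(X); only its values on T(X) are relevant.\<close>
definition is_point :: "('a \<Rightarrow> 'l::complete_lattice) set \<Rightarrow> (('a \<Rightarrow> 'l) \<Rightarrow> 'l) \<Rightarrow> bool" where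
  "is_point T p \<longleftrightarrow> (\<forall>U\<in>T. \<forall>V\<in>T. p (inf U V) = inf (p U) (p V))
     \<and> (\<forall>\<U>\<subseteq>T. p (Sup \<U>) = (SUP U\<in>\<U>. p U)) \<and> (\<forall>c. p (\<lambda>_. c) = c)"

text \<open>L-sober: x \<mapsto> [x] (as a map on T(X)) is a bijection onto the points.
  Points are identified when they agree on T(X).\<close>
definition L_sober :: "('a \<Rightarrow> 'l::complete_lattice) set \<Rightarrow> bool" where
  "L_sober T \<longleftrightarrow> (\<forall>x y. (\<forall>U\<in>T. U x = U y) \<longrightarrow> x = y)
     \<and> (\<forall>p. is_point T p \<longrightarrow> (\<exists>x. \<forall>U\<in>T. p U = U x))"

definition spec_order :: "('l::complete_lattice \<Rightarrow> 'l \<Rightarrow> 'l) \<Rightarrow> ('a \<Rightarrow> 'l) set \<Rightarrow> 'a \<Rightarrow> 'a \<Rightarrow> 'l" where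
  "spec_order imp T x y = (INF A\<in>T. imp (A x) (A y))"

definition L_order :: "('a \<Rightarrow> 'a \<Rightarrow> 'l::complete_lattice) \<Rightarrow> bool" where
  "L_order e \<longleftrightarrow> (\<forall>x. e x x = top) \<and> (\<forall>x y z. inf (e x y) (e y z) \<le> e x z)
     \<and> (\<forall>x y. inf (e x y) (e y x) = top \<longrightarrow> x = y)"

definition is_Lsup :: "('l::complete_lattice \<Rightarrow> 'l \<Rightarrow> 'l) \<Rightarrow> ('a \<Rightarrow> 'a \<Rightarrow> 'l) \<Rightarrow> ('a \<Rightarrow> 'l) \<Rightarrow> 'a \<Rightarrow> bool" where
  "is_Lsup imp e A x \<longleftrightarrow> (\<forall>y. e x y = subL imp A (\<lambda>z. e z y))"

definition directedL :: "('a \<Rightarrow> 'a \<Rightarrow> 'l::complete_lattice) \<Rightarrow> ('a \<Rightarrow> 'l) \<Rightarrow> bool" where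
  "directedL e D \<longleftrightarrow> nonemptyL D \<and>
     (\<forall>x y. inf (D x) (D y) \<le> (SUP z. inf (inf (D z) (e x z)) (e y z)))"

definition lower_setL :: "('a \<Rightarrow> 'a \<Rightarrow> 'l::complete_lattice) \<Rightarrow> ('a \<Rightarrow> 'l) \<Rightarrow> bool" where
  "lower_setL e A \<longleftrightarrow> (\<forall>x y. inf (A y) (e x y) \<le> A x)"

definition upper_setL :: "('a \<Rightarrow> 'a \<Rightarrow> 'l::complete_lattice) \<Rightarrow> ('a \<Rightarrow> 'l) \<Rightarrow> bool" where
  "upper_setL e A \<longleftrightarrow> (\<forall>x y. inf (A x) (e x y) \<le> A y)"

definition idealL :: "('a \<Rightarrow> 'a \<Rightarrow> 'l::complete_lattice) \<Rightarrow> ('a \<Rightarrow> 'l) \<Rightarrow> bool" where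
  "idealL e I \<longleftrightarrow> directedL e I \<and> lower_setL e I"

definition L_dcpo :: "('l::complete_lattice \<Rightarrow> 'l \<Rightarrow> 'l) \<Rightarrow> ('a \<Rightarrow> 'a \<Rightarrow> 'l) \<Rightarrow> bool" where
  "L_dcpo imp e \<longleftrightarrow> L_order e \<and> (\<forall>D. directedL e D \<longrightarrow> (\<exists>x. is_Lsup imp e D x))"

definition way_below :: "('l::complete_lattice \<Rightarrow> 'l \<Rightarrow> 'l) \<Rightarrow> ('a \<Rightarrow> 'a \<Rightarrow> 'l) \<Rightarrow> 'a \<Rightarrow> 'a \<Rightarrow> 'l" where
  "way_below imp e x y = Inf {imp (e x s) (I y) | I s. idealL e I \<and> is_Lsup imp e I s}"

definition continuous_L_dcpo :: "('l::complete_lattice \<Rightarrow> 'l \<Rightarrow> 'l) \<Rightarrow> ('a \<Rightarrow> 'a \<Rightarrow> 'l) \<Rightarrow> bool" where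
  "continuous_L_dcpo imp e \<longleftrightarrow> L_dcpo imp e \<and>
     (\<forall>x. directedL e (way_below imp e x) \<and> is_Lsup imp e (way_below imp e x) x)"

definition scottL :: "('l::complete_lattice \<Rightarrow> 'l \<Rightarrow> 'l) \<Rightarrow> ('a \<Rightarrow> 'a \<Rightarrow> 'l) \<Rightarrow> ('a \<Rightarrow> 'l) set" where
  "scottL imp e = {A. upper_setL e A \<and>
     (\<forall>D s. directedL e D \<and> is_Lsup imp e D s \<longrightarrow> A s = (SUP x. inf (A x) (D x)))}"

end

theory Submission
  imports Defs
begin

text \<open>
  (1) A directed L-subset D of the specialization order defines the point
  V \<mapsto> \<Or>_x V(x) \<and> D(x) of the topology; by sobriety it is [t] for some t, and t is the
  supremum of D, so open sets are Scott open. Conversely, every super-compact B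
  determines the point subL B, hence by sobriety an element c_B. For fixed x the
  L-subset y \<mapsto> \<Or>{B\<degree>(x) | c_B = y} is directed with supremum x by local
  super-compactness, and Scott openness of A along it gives A(x) \<le> A\<degree>(x).

  (2) Scott open sets are upper sets, so e is below the specialization order.
  Conversely each w \<mapsto> \<Down>w(z) is Scott open: for directed D with supremum s, the
  ideal \<Or>_w D(w) \<and> \<Down>w also has supremum s. Since x = \<Squnion>\<Down>x, testing the
  specialization order on these open sets gives the reverse inequality.
\<close>

lemma eq_if_same_lower_bounds: "(\<And>c. c \<le> a \<longleftrightarrow> c \<le> b) \<Longrightarrow> a = (b::'a::order)"
  by (rule order.antisym) auto

lemma interiorL_le: "interiorL T A \<le> A"
  unfolding interiorL_def by (rule Sup_least) blast

lemma interiorL_maximal: "U \<in> T \<Longrightarrow> U \<le> A \<Longrightarrow> U \<le> interiorL T A"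
  unfolding interiorL_def by (rule Sup_upper) blast

lemma interiorL_open: "Ltopology T \<Longrightarrow> interiorL T A \<in> T"
  unfolding interiorL_def Ltopology_def by auto

locale frame_implication =
  fixes imp :: "'l::complete_lattice \<Rightarrow> 'l \<Rightarrow> 'l"
  assumes residuation: "is_frame_impl imp"
begin

lemma le_imp_iff: "c \<le> imp a b \<longleftrightarrow> inf c a \<le> b"
  using residuation by (simp add: is_frame_impl_def)

lemma inf_SUP_le_iff:
  fixes b c :: 'l
  shows "inf b (SUP i\<in>S. f i) \<le> c \<longleftrightarrow> (\<forall>i\<in>S. inf b (f i) \<le> c)"
proof -
  have "inf b (SUP i\<in>S. f i) \<le> c \<longleftrightarrow> (SUP i\<in>S. f i) \<le> imp b c"
    by (metis le_imp_iff inf_commute)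
  also have "\<dots> \<longleftrightarrow> (\<forall>i\<in>S. f i \<le> imp b c)"
    by (rule SUP_le_iff)
  finally show ?thesis
    by (metis le_imp_iff inf_commute)
qed

lemma inf_SUP:
  fixes b :: 'l
  shows "inf b (SUP i\<in>S. f i) = (SUP i\<in>S. inf b (f i))"
  by (rule eq_if_same_lower_bounds)
    (meson inf_SUP_le_iff SUP_le_iff SUP_upper order_trans order_refl)

lemma SUP_inf:
  fixes b :: 'l
  shows "inf (SUP i\<in>S. f i) b = (SUP i\<in>S. inf (f i) b)"
  by (simp add: inf_commute inf_SUP)

lemma inf_SUP_SUP_le:
  fixes c :: 'l
  assumes "\<And>i j. i \<in> S \<Longrightarrow> j \<in> R \<Longrightarrow> inf (f i) (g j) \<le> c"
  shows "inf (SUP i\<in>S. f i) (SUP j\<in>R. g j) \<le> c"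
proof -
  have "inf (f i) (SUP j\<in>R. g j) \<le> c" if "i \<in> S" for i
    using assms that by (simp add: inf_SUP_le_iff)
  then have "inf (SUP j\<in>R. g j) (SUP i\<in>S. f i) \<le> c"
    by (simp add: inf_SUP_le_iff inf_commute)
  then show ?thesis
    by (simp add: inf_commute)
qed

lemma le_subL_iff: "c \<le> subL imp A B \<longleftrightarrow> (\<forall>x. inf c (A x) \<le> B x)"
  by (simp add: subL_def le_INF_iff le_imp_iff)

lemma is_Lsup_iff:
  "is_Lsup imp e D s \<longleftrightarrow> (\<forall>y c. c \<le> e s y \<longleftrightarrow> (\<forall>z. inf c (D z) \<le> e z y))"
  unfolding is_Lsup_def le_subL_iff[symmetric] by (metis eq_if_same_lower_bounds)

lemma le_Lsup_iff: "is_Lsup imp e D s \<Longrightarrow> c \<le> e s y \<longleftrightarrow> (\<forall>z. inf c (D z) \<le> e z y)"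
  by (simp add: is_Lsup_iff)

lemma Lsup_upper: "e s s = top \<Longrightarrow> is_Lsup imp e D s \<Longrightarrow> D z \<le> e z s"
  using le_Lsup_iff[of e D s top s] by simp

lemma Lsup_unique:
  assumes "L_order e" and "is_Lsup imp e D s" and "is_Lsup imp e D t"
  shows "s = t"
proof -
  have refl: "e x x = top" for x
    using assms(1) by (simp add: L_order_def)
  have "e s t = top" and "e t s = top"
    using assms(2,3) by (simp_all add: le_Lsup_iff top_unique[symmetric] Lsup_upper refl)
  then show ?thesis
    using assms(1) by (simp add: L_order_def)
qed

lemma idealL_principal:
  assumes "L_order e"
  shows "idealL e (\<lambda>x. e x y)"
proof -
  have refl: "e y y = top" and trans: "\<And>x z. inf (e x z) (e z y) \<le> e x y"
    using assms by (simp_all add: L_order_def)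
  have "(SUP x. e x y) = top"
    by (metis refl SUP_upper UNIV_I top_unique)
  moreover have "inf (e x y) (e x' y) \<le> (SUP z. inf (inf (e z y) (e x z)) (e x' z))" for x x'
    by (rule SUP_upper2[of y]) (simp_all add: refl)
  ultimately show ?thesis
    unfolding idealL_def directedL_def nonemptyL_def lower_setL_def
    using trans by (simp add: inf_commute)
qed

lemma Lsup_principal:
  assumes "L_order e"
  shows "is_Lsup imp e (\<lambda>x. e x y) y"
  unfolding is_Lsup_iff
proof (intro allI)
  fix y' and c :: 'l
  have refl: "e y y = top" and trans: "\<And>x. inf (e x y) (e y y') \<le> e x y'"
    using assms by (simp_all add: L_order_def)
  show "c \<le> e y y' \<longleftrightarrow> (\<forall>x. inf c (e x y) \<le> e x y')"
  proof
    assume "c \<le> e y y'"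
    then have "inf c (e x y) \<le> inf (e x y) (e y y')" for x
      by (auto intro: le_infI1)
    then show "\<forall>x. inf c (e x y) \<le> e x y'"
      using trans order_trans by blast
  next
    assume "\<forall>x. inf c (e x y) \<le> e x y'"
    then show "c \<le> e y y'"
      using refl by (metis inf_top_right)
  qed
qed

lemma le_spec_order_iff: "c \<le> spec_order imp T x y \<longleftrightarrow> (\<forall>U\<in>T. inf c (U x) \<le> U y)"
  by (simp add: spec_order_def le_INF_iff le_imp_iff)

lemma open_spec_order_upper: "U \<in> T \<Longrightarrow> inf (U x) (spec_order imp T x y) \<le> U y"
  using le_spec_order_iff[of "spec_order imp T x y" T x y] by (simp add: inf_commute)

lemma L_order_spec_order:
  assumes "\<And>x y. \<forall>U\<in>T. U x = U y \<Longrightarrow> x = y"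
  shows "L_order (spec_order imp T)"
  unfolding L_order_def
proof (intro conjI allI impI)
  fix x y z
  show "spec_order imp T x x = top"
    by (simp add: top_unique[symmetric] le_spec_order_iff)
  show "inf (spec_order imp T x y) (spec_order imp T y z) \<le> spec_order imp T x z"
    unfolding le_spec_order_iff
  proof
    fix U assume U: "U \<in> T"
    have "inf (inf (spec_order imp T x y) (spec_order imp T y z)) (U x)
        \<le> inf (inf (U x) (spec_order imp T x y)) (spec_order imp T y z)"
      by (simp add: inf_commute inf_left_commute)
    also have "\<dots> \<le> inf (U y) (spec_order imp T y z)"
      using U by (intro inf_mono open_spec_order_upper order_refl)
    also have "\<dots> \<le> U z"
      using U by (rule open_spec_order_upper)
    finally show "inf (inf (spec_order imp T x y) (spec_order imp T y z)) (U x) \<le> U z" .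
  qed
next
  fix x y
  assume "inf (spec_order imp T x y) (spec_order imp T y x) = top"
  then have "\<forall>U\<in>T. U x \<le> U y \<and> U y \<le> U x"
    by (simp add: top_unique[symmetric] le_spec_order_iff)
  then show "x = y"
    by (intro assms) (simp add: order.antisym)
qed

lemma le_spec_order_scottL: "e x y \<le> spec_order imp (scottL imp e) x y"
  unfolding le_spec_order_iff scottL_def upper_setL_def by (simp add: inf_commute)

lemma inf_SUP_directedL_le:
  assumes D: "directedL (spec_order imp T) D" and V: "V \<in> T" and W: "W \<in> T"
  shows "inf (SUP x. inf (V x) (D x)) (SUP x. inf (W x) (D x)) \<le> (SUP z. inf (inf V W z) (D z))"
    (is "_ \<le> ?R")
proof (rule inf_SUP_SUP_le)
  fix x y
  let ?sp = "spec_order imp T"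
  have "inf (inf (V x) (D x)) (inf (W y) (D y)) = inf (inf (V x) (W y)) (inf (D x) (D y))"
    by (simp add: inf_aci)
  also have "\<dots> \<le> inf (inf (V x) (W y)) (SUP z. inf (inf (D z) (?sp x z)) (?sp y z))"
    using D by (intro inf_mono order_refl) (simp add: directedL_def)
  also have "\<dots> \<le> ?R"
    unfolding inf_SUP_le_iff
  proof
    fix z
    have "inf (inf (V x) (W y)) (inf (inf (D z) (?sp x z)) (?sp y z))
        = inf (inf (inf (V x) (?sp x z)) (inf (W y) (?sp y z))) (D z)"
      by (simp add: inf_aci)
    also have "\<dots> \<le> inf (inf V W z) (D z)"
      unfolding inf_apply using V W by (intro inf_mono open_spec_order_upper order_refl)
    also have "\<dots> \<le> ?R"
      by (rule SUP_upper) simp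
    finally show "inf (inf (V x) (W y)) (inf (inf (D z) (?sp x z)) (?sp y z)) \<le> ?R" .
  qed
  finally show "inf (inf (V x) (D x)) (inf (W y) (D y)) \<le> ?R" .
qed

lemma directedL_is_point:
  assumes D: "directedL (spec_order imp T) D"
  shows "is_point T (\<lambda>V. SUP x. inf (V x) (D x))"
  unfolding is_point_def
proof (intro conjI ballI allI impI)
  let ?p = "\<lambda>V. SUP x. inf (V x) (D x)"
  fix V W
  assume "V \<in> T" and "W \<in> T"
  show "?p (inf V W) = inf (?p V) (?p W)"
  proof (rule order.antisym)
    show "?p (inf V W) \<le> inf (?p V) (?p W)"
      by (intro le_infI SUP_mono') (simp_all add: le_infI1)
    show "inf (?p V) (?p W) \<le> ?p (inf V W)"
      using D \<open>V \<in> T\<close> \<open>W \<in> T\<close> by (rule inf_SUP_directedL_le)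
  qed
next
  let ?p = "\<lambda>V. SUP x. inf (V x) (D x)"
  fix \<U>
  have "?p (Sup \<U>) = (SUP x. SUP V\<in>\<U>. inf (V x) (D x))"
    by (simp add: Sup_apply SUP_inf)
  then show "?p (Sup \<U>) = (SUP V\<in>\<U>. ?p V)"
    by (simp add: SUP_commute[of _ UNIV])
next
  fix c
  have "(SUP x. D x) = top"
    using D by (simp add: directedL_def nonemptyL_def)
  then show "(SUP x. inf c (D x)) = c"
    unfolding inf_SUP[symmetric] by simp
qed

lemma Lsup_of_point:
  assumes t: "\<forall>V\<in>T. (SUP x. inf (V x) (D x)) = V t"
  shows "is_Lsup imp (spec_order imp T) D t"
  unfolding is_Lsup_iff
proof (intro allI)
  fix y c
  have swap: "inf c (inf (V x) (D x)) = inf (inf c (D x)) (V x)" for V x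
    by (simp add: inf_aci)
  have "c \<le> spec_order imp T t y \<longleftrightarrow> (\<forall>V\<in>T. inf c (SUP x. inf (V x) (D x)) \<le> V y)"
    using t by (simp add: le_spec_order_iff)
  also have "\<dots> \<longleftrightarrow> (\<forall>x. \<forall>V\<in>T. inf (inf c (D x)) (V x) \<le> V y)"
    unfolding inf_SUP_le_iff swap by blast
  also have "\<dots> \<longleftrightarrow> (\<forall>x. inf c (D x) \<le> spec_order imp T x y)"
    by (simp add: le_spec_order_iff)
  finally show "c \<le> spec_order imp T t y \<longleftrightarrow> (\<forall>x. inf c (D x) \<le> spec_order imp T x y)" .
qed

lemma open_subset_scottL:
  assumes sober: "L_sober T"
  shows "T \<subseteq> scottL imp (spec_order imp T)"
proof
  fix U
  assume U: "U \<in> T"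
  show "U \<in> scottL imp (spec_order imp T)"
    unfolding scottL_def
  proof (intro CollectI conjI allI impI)
    show "upper_setL (spec_order imp T) U"
      using U by (simp add: upper_setL_def open_spec_order_upper)
    fix D s
    assume Ds: "directedL (spec_order imp T) D \<and> is_Lsup imp (spec_order imp T) D s"
    then obtain t where t: "\<forall>V\<in>T. (SUP x. inf (V x) (D x)) = V t"
      using sober directedL_is_point unfolding L_sober_def by blast
    have "L_order (spec_order imp T)"
      using sober by (intro L_order_spec_order) (simp add: L_sober_def)
    then have "s = t"
      using Ds Lsup_of_point[OF t] by (blast intro: Lsup_unique)
    then show "U s = (SUP x. inf (U x) (D x))"
      using t U by simp
  qed
qed

lemma super_compact_is_point:
  assumes B: "super_compact imp T B"
  shows "is_point T (subL imp B)"
  unfolding is_point_def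
proof (intro conjI ballI allI impI)
  fix U V
  show "subL imp B (inf U V) = inf (subL imp B U) (subL imp B V)"
    by (rule eq_if_same_lower_bounds) (auto simp: le_subL_iff)
next
  fix \<U>
  assume "\<U> \<subseteq> T"
  then show "subL imp B (Sup \<U>) = (SUP U\<in>\<U>. subL imp B U)"
    using B by (simp add: super_compact_def)
next
  fix c
  have "(SUP x. B x) = top"
    using B by (simp add: super_compact_def nonemptyL_def)
  then have "d \<le> subL imp B (\<lambda>_. c) \<longleftrightarrow> d \<le> c" for d
    using inf_SUP_le_iff[where b=d and c=c and S=UNIV and f=B] by (simp add: le_subL_iff)
  then show "subL imp B (\<lambda>_. c) = c"
    by (rule eq_if_same_lower_bounds)
qed

lemma le_way_below_iff:
  "c \<le> way_below imp e x y \<longleftrightarrow>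
    (\<forall>I s. idealL e I \<and> is_Lsup imp e I s \<longrightarrow> inf c (e x s) \<le> I y)"
  unfolding way_below_def le_Inf_iff le_imp_iff[symmetric] by blast

lemma way_below_le_ideal:
  assumes "idealL e I" and "is_Lsup imp e I s"
  shows "inf (way_below imp e x y) (e x s) \<le> I y"
proof -
  have "\<forall>I s. idealL e I \<and> is_Lsup imp e I s \<longrightarrow> inf (way_below imp e x y) (e x s) \<le> I y"
    using le_way_below_iff[of "way_below imp e x y" e x y] by simp
  then show ?thesis
    using assms by blast
qed

lemma way_below_mono:
  assumes "L_order e"
  shows "inf (way_below imp e x z) (e x x') \<le> way_below imp e x' z"
  unfolding le_way_below_iff
proof (intro allI impI)
  fix I s
  assume "idealL e I \<and> is_Lsup imp e I s"
  then have "inf (way_below imp e x z) (e x s) \<le> I z"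
    by (simp add: way_below_le_ideal)
  moreover have "inf (inf (way_below imp e x z) (e x x')) (e x' s) \<le> inf (way_below imp e x z) (e x s)"
    using assms unfolding inf_assoc by (intro inf_mono order_refl) (simp add: L_order_def)
  ultimately show "inf (inf (way_below imp e x z) (e x x')) (e x' s) \<le> I z"
    by (rule order_trans[rotated])
qed

lemma lower_setL_way_below: "lower_setL e (way_below imp e x)"
  unfolding lower_setL_def le_way_below_iff
proof (intro allI impI)
  fix u u' I s
  assume I: "idealL e I \<and> is_Lsup imp e I s"
  then have "inf (way_below imp e x u') (e x s) \<le> I u'"
    by (simp add: way_below_le_ideal)
  then have "inf (inf (way_below imp e x u') (e x s)) (e u u') \<le> inf (I u') (e u u')"
    by (rule inf_mono[OF _ order_refl])
  then have "inf (inf (way_below imp e x u') (e u u')) (e x s) \<le> inf (I u') (e u u')"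
    by (simp add: inf_aci)
  also have "\<dots> \<le> I u"
    using I by (simp add: idealL_def lower_setL_def)
  finally show "inf (inf (way_below imp e x u') (e u u')) (e x s) \<le> I u" .
qed

lemma way_below_le:
  assumes e: "L_order e"
  shows "way_below imp e x z \<le> e z x"
proof -
  have "inf (way_below imp e x z) (e x x) \<le> e z x"
    using idealL_principal[OF e] Lsup_principal[OF e] by (rule way_below_le_ideal)
  then show ?thesis
    using e by (simp add: L_order_def)
qed

end

section \<open>Locally super-compact sober spaces\<close>

locale lsc_sober_space = frame_implication imp
  for imp :: "'l::complete_lattice \<Rightarrow> 'l \<Rightarrow> 'l" +
  fixes T :: "('a \<Rightarrow> 'l) set"
  assumes topology: "Ltopology T"
    and locally_super_compact: "locally_super_compact imp T"
    and sober: "L_sober T"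
begin

lemma L_order_spec: "L_order (spec_order imp T)"
  using sober by (intro L_order_spec_order) (simp add: L_sober_def)

text \<open>By sobriety the point subL B of a super-compact B is [x] for a unique x.\<close>

definition center :: "('a \<Rightarrow> 'l) \<Rightarrow> 'a" where
  "center B = (SOME x. \<forall>U\<in>T. subL imp B U = U x)"

lemma subL_center:
  assumes "B \<in> SC imp T" and "U \<in> T"
  shows "subL imp B U = U (center B)"
proof -
  have "is_point T (subL imp B)"
    using assms(1) by (simp add: SC_def super_compact_is_point)
  then have "\<exists>x. \<forall>U\<in>T. subL imp B U = U x"
    using sober by (simp add: L_sober_def)
  then have "\<forall>U\<in>T. subL imp B U = U (center B)"
    unfolding center_def by (rule someI_ex)
  then show ?thesis
    using assms(2) by blast
qed

lemma interiorL_le_spec_order_center: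
  assumes B: "B \<in> SC imp T"
  shows "interiorL T B z \<le> spec_order imp T (center B) z"
proof -
  have "B z \<le> spec_order imp T (center B) z"
    unfolding le_spec_order_iff
  proof
    fix U
    assume U: "U \<in> T"
    have "U (center B) \<le> imp (B z) (U z)"
      unfolding subL_center[OF B U, symmetric] subL_def by (rule INF_lower) simp
    then show "inf (B z) (U (center B)) \<le> U z"
      by (simp add: le_imp_iff inf_commute)
  qed
  then show ?thesis
    using le_funD[OF interiorL_le[of T B], of z] order_trans by blast
qed

lemma open_eq_SUP_center:
  assumes U: "U \<in> T"
  shows "U x = (SUP B\<in>SC imp T. inf (U (center B)) (interiorL T B x))"
proof -
  have "U = (SUP B\<in>SC imp T. (\<lambda>x. inf (subL imp B U) (interiorL T B x)))"
    using locally_super_compact U by (simp add: locally_super_compact_def)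
  then have "U x = (SUP B\<in>SC imp T. (\<lambda>x. inf (subL imp B U) (interiorL T B x))) x"
    by (rule fun_cong)
  also have "\<dots> = (SUP B\<in>SC imp T. inf (subL imp B U) (interiorL T B x))"
    by (rule SUP_apply)
  also have "\<dots> = (SUP B\<in>SC imp T. inf (U (center B)) (interiorL T B x))"
    using U by (intro SUP_cong) (simp_all add: subL_center)
  finally show ?thesis .
qed

definition approximants :: "'a \<Rightarrow> 'a \<Rightarrow> 'l" where
  "approximants x y = (SUP B\<in>{B\<in>SC imp T. center B = y}. interiorL T B x)"

lemma interiorL_le_approximants:
  "B \<in> SC imp T \<Longrightarrow> interiorL T B x \<le> approximants x (center B)"
  unfolding approximants_def by (rule SUP_upper) simp

lemma nonemptyL_approximants: "nonemptyL (approximants x)"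
  unfolding nonemptyL_def
proof -
  have "top = (SUP B\<in>SC imp T. inf top (interiorL T B x))"
    using open_eq_SUP_center[of "\<lambda>_. top" x] topology by (simp add: Ltopology_def)
  also have "\<dots> \<le> (SUP y. approximants x y)"
  proof (rule SUP_least)
    fix B
    assume "B \<in> SC imp T"
    then show "inf top (interiorL T B x) \<le> (SUP y. approximants x y)"
      by (intro SUP_upper2[of "center B"]) (simp_all add: interiorL_le_approximants)
  qed
  finally show "(SUP y. approximants x y) = top"
    by (simp add: top_unique)
qed

lemma inf_interiorL_le_SUP_approximants:
  assumes B1: "B1 \<in> SC imp T" and B2: "B2 \<in> SC imp T"
  shows "inf (interiorL T B1 x) (interiorL T B2 x) \<le> (SUP z.
    inf (inf (approximants x z) (spec_order imp T (center B1) z)) (spec_order imp T (center B2) z))"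
    (is "_ \<le> ?R")
proof -
  let ?sp = "spec_order imp T (center B1)" and ?sp' = "spec_order imp T (center B2)"
  define W where "W = inf (interiorL T B1) (interiorL T B2)"
  have "W \<in> T"
    using topology by (simp add: W_def Ltopology_def interiorL_open)
  have "W x \<le> ?R"
    unfolding open_eq_SUP_center[OF \<open>W \<in> T\<close>, of x]
  proof (rule SUP_least)
    fix B
    assume B: "B \<in> SC imp T"
    have "W (center B) \<le> inf (?sp (center B)) (?sp' (center B))"
      using B1 B2 unfolding W_def inf_apply by (intro inf_mono interiorL_le_spec_order_center)
    then have "inf (W (center B)) (interiorL T B x)
        \<le> inf (interiorL T B x) (inf (?sp (center B)) (?sp' (center B)))"
      by (subst inf_commute) (rule inf_mono[OF order_refl])
    also have "\<dots> \<le> inf (approximants x (center B)) (inf (?sp (center B)) (?sp' (center B)))"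
      using B by (intro inf_mono order_refl interiorL_le_approximants)
    also have "\<dots> \<le> ?R"
      by (rule SUP_upper2[of "center B"]) (simp_all add: inf_assoc)
    finally show "inf (W (center B)) (interiorL T B x) \<le> ?R" .
  qed
  then show ?thesis
    by (simp add: W_def)
qed

lemma directedL_approximants: "directedL (spec_order imp T) (approximants x)"
  unfolding directedL_def
proof (intro conjI allI)
  show "nonemptyL (approximants x)"
    by (rule nonemptyL_approximants)
  fix y1 y2
  show "inf (approximants x y1) (approximants x y2) \<le> (SUP z.
      inf (inf (approximants x z) (spec_order imp T y1 z)) (spec_order imp T y2 z))"
    unfolding approximants_def[of x y1] approximants_def[of x y2]
    by (rule inf_SUP_SUP_le) (auto simp: inf_interiorL_le_SUP_approximants)
qed

lemma le_spec_order_iff_center: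
  "c \<le> spec_order imp T x y \<longleftrightarrow>
    (\<forall>B\<in>SC imp T. inf c (interiorL T B x) \<le> spec_order imp T (center B) y)"
  (is "_ \<longleftrightarrow> (\<forall>B\<in>SC imp T. ?le B)")
proof
  assume c: "c \<le> spec_order imp T x y"
  show "\<forall>B\<in>SC imp T. ?le B"
  proof
    fix B
    assume "B \<in> SC imp T"
    then have "inf c (interiorL T B x)
        \<le> inf (spec_order imp T (center B) x) (spec_order imp T x y)"
      using inf_mono[OF c interiorL_le_spec_order_center] by (simp add: inf_commute)
    also have "\<dots> \<le> spec_order imp T (center B) y"
      using L_order_spec by (simp add: L_order_def)
    finally show "?le B" .
  qed
next
  assume c: "\<forall>B\<in>SC imp T. ?le B"
  show "c \<le> spec_order imp T x y"
    unfolding le_spec_order_iff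
  proof
    fix U
    assume U: "U \<in> T"
    have "inf c (inf (U (center B)) (interiorL T B x)) \<le> U y" if B: "B \<in> SC imp T" for B
    proof -
      have "inf c (inf (U (center B)) (interiorL T B x))
          = inf (U (center B)) (inf c (interiorL T B x))"
        by (simp add: inf_aci)
      also have "\<dots> \<le> inf (U (center B)) (spec_order imp T (center B) y)"
        using c B by (intro inf_mono order_refl) blast
      also have "\<dots> \<le> U y"
        using U by (rule open_spec_order_upper)
      finally show ?thesis .
    qed
    then show "inf c (U x) \<le> U y"
      unfolding open_eq_SUP_center[OF U, of x] inf_SUP_le_iff by blast
  qed
qed

lemma Lsup_approximants: "is_Lsup imp (spec_order imp T) (approximants x) x"
  unfolding is_Lsup_iff
proof (intro allI)
  fix y c
  have "(\<forall>z. inf c (approximants x z) \<le> spec_order imp T z y)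
      \<longleftrightarrow> (\<forall>B\<in>SC imp T. inf c (interiorL T B x) \<le> spec_order imp T (center B) y)"
    unfolding approximants_def inf_SUP_le_iff by auto
  then show "c \<le> spec_order imp T x y
      \<longleftrightarrow> (\<forall>z. inf c (approximants x z) \<le> spec_order imp T z y)"
    using le_spec_order_iff_center[of c x y] by simp
qed

lemma scottL_inf_interiorL_le:
  assumes A: "A \<in> scottL imp (spec_order imp T)" and B: "B \<in> SC imp T"
  shows "inf (A (center B)) (interiorL T B x) \<le> interiorL T A x"
proof -
  let ?W = "inf (\<lambda>_. A (center B)) (interiorL T B)"
  have "?W \<in> T"
    using topology by (simp add: Ltopology_def interiorL_open)
  moreover have "?W \<le> A"
  proof (rule le_funI)
    fix z
    have "?W z \<le> inf (A (center B)) (spec_order imp T (center B) z)"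
      using B unfolding inf_apply by (intro inf_mono order_refl interiorL_le_spec_order_center)
    also have "\<dots> \<le> A z"
      using A by (simp add: scottL_def upper_setL_def)
    finally show "?W z \<le> A z" .
  qed
  ultimately have "?W \<le> interiorL T A"
    by (rule interiorL_maximal)
  then show ?thesis
    by (simp add: le_fun_def)
qed

lemma scottL_subset_open: "scottL imp (spec_order imp T) \<subseteq> T"
proof
  fix A
  assume A: "A \<in> scottL imp (spec_order imp T)"
  have "A x \<le> interiorL T A x" for x
  proof -
    have "A x = (SUP y. inf (A y) (approximants x y))"
      using A directedL_approximants Lsup_approximants by (simp add: scottL_def)
    also have "\<dots> \<le> interiorL T A x"
      unfolding approximants_def inf_SUP_le_iff SUP_le_iff
      using scottL_inf_interiorL_le[OF A] by auto
    finally show ?thesis .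
  qed
  then have "A = interiorL T A"
    using interiorL_le[of T A] by (simp add: order.antisym le_funI)
  then show "A \<in> T"
    using interiorL_open[OF topology] by metis
qed

theorem scottL_spec_order: "scottL imp (spec_order imp T) = T"
  using open_subset_scottL[OF sober] scottL_subset_open by blast

end

section \<open>Continuous L-dcpos\<close>

locale continuous_Ldcpo = frame_implication imp
  for imp :: "'l::complete_lattice \<Rightarrow> 'l \<Rightarrow> 'l" +
  fixes e :: "'b \<Rightarrow> 'b \<Rightarrow> 'l"
  assumes continuous: "continuous_L_dcpo imp e"
begin

lemma L_order: "L_order e"
  using continuous by (simp add: continuous_L_dcpo_def L_dcpo_def)

lemma directedL_way_below: "directedL e (way_below imp e x)"
  using continuous by (simp add: continuous_L_dcpo_def)

lemma Lsup_way_below: "is_Lsup imp e (way_below imp e x) x"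
  using continuous by (simp add: continuous_L_dcpo_def)

definition way_below_union :: "('b \<Rightarrow> 'l) \<Rightarrow> 'b \<Rightarrow> 'l" where
  "way_below_union D u = (SUP w. inf (D w) (way_below imp e w u))"

lemma le_way_below_union: "inf (D w) (way_below imp e w u) \<le> way_below_union D u"
  unfolding way_below_union_def by (rule SUP_upper) simp

lemma lower_setL_way_below_union: "lower_setL e (way_below_union D)"
  unfolding lower_setL_def
proof (intro allI)
  fix u u'
  have "inf (e u u') (inf (D w) (way_below imp e w u')) \<le> way_below_union D u" for w
  proof -
    have "inf (e u u') (inf (D w) (way_below imp e w u'))
        = inf (D w) (inf (way_below imp e w u') (e u u'))"
      by (simp add: inf_aci)
    also have "\<dots> \<le> inf (D w) (way_below imp e w u)"
      using lower_setL_way_below[of e w] by (intro inf_mono order_refl) (simp add: lower_setL_def)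
    also have "\<dots> \<le> way_below_union D u"
      by (rule le_way_below_union)
    finally show ?thesis .
  qed
  then show "inf (way_below_union D u') (e u u') \<le> way_below_union D u"
    unfolding way_below_union_def[of D u'] by (simp add: inf_commute inf_SUP_le_iff)
qed

lemma nonemptyL_way_below_union:
  assumes "nonemptyL D"
  shows "nonemptyL (way_below_union D)"
proof -
  have "(SUP u. way_below_union D u) = (SUP w. inf (D w) (SUP u. way_below imp e w u))"
    unfolding way_below_union_def inf_SUP by (rule SUP_commute)
  also have "\<dots> = (SUP w. D w)"
    using directedL_way_below by (simp add: directedL_def nonemptyL_def)
  finally show ?thesis
    using assms by (simp add: nonemptyL_def)
qed

lemma inf_way_below_le_SUP_way_below_union:
  "inf (D w) (inf (way_below imp e w u1) (way_below imp e w u2))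
    \<le> (SUP v. inf (inf (way_below_union D v) (e u1 v)) (e u2 v))" (is "_ \<le> ?R")
proof -
  have "inf (way_below imp e w u1) (way_below imp e w u2)
      \<le> (SUP v. inf (inf (way_below imp e w v) (e u1 v)) (e u2 v))"
    using directedL_way_below[of w] by (simp add: directedL_def)
  then have "inf (D w) (inf (way_below imp e w u1) (way_below imp e w u2))
      \<le> inf (D w) (SUP v. inf (inf (way_below imp e w v) (e u1 v)) (e u2 v))"
    by (rule inf_mono[OF order_refl])
  also have "\<dots> \<le> ?R"
    unfolding inf_SUP_le_iff
  proof
    fix v
    have "inf (D w) (inf (inf (way_below imp e w v) (e u1 v)) (e u2 v))
        = inf (inf (inf (D w) (way_below imp e w v)) (e u1 v)) (e u2 v)"
      by (simp add: inf_aci)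
    also have "\<dots> \<le> inf (inf (way_below_union D v) (e u1 v)) (e u2 v)"
      by (intro inf_mono order_refl le_way_below_union)
    also have "\<dots> \<le> ?R"
      by (rule SUP_upper) simp
    finally show "inf (D w) (inf (inf (way_below imp e w v) (e u1 v)) (e u2 v)) \<le> ?R" .
  qed
  finally show ?thesis .
qed

lemma directedL_way_below_union:
  assumes D: "directedL e D"
  shows "directedL e (way_below_union D)"
  unfolding directedL_def
proof (intro conjI allI)
  show "nonemptyL (way_below_union D)"
    using D by (simp add: directedL_def nonemptyL_way_below_union)
  fix u1 u2
  let ?R = "SUP v. inf (inf (way_below_union D v) (e u1 v)) (e u2 v)"
  show "inf (way_below_union D u1) (way_below_union D u2) \<le> ?R"
    unfolding way_below_union_def[of D u1] way_below_union_def[of D u2]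
  proof (rule inf_SUP_SUP_le)
    fix w1 w2
    let ?a = "inf (way_below imp e w1 u1) (way_below imp e w2 u2)"
    have "inf (inf (D w1) (way_below imp e w1 u1)) (inf (D w2) (way_below imp e w2 u2))
        = inf ?a (inf (D w1) (D w2))"
      by (simp add: inf_aci)
    also have "\<dots> \<le> inf ?a (SUP w. inf (inf (D w) (e w1 w)) (e w2 w))"
      using D by (intro inf_mono order_refl) (simp add: directedL_def)
    also have "\<dots> \<le> ?R"
      unfolding inf_SUP_le_iff
    proof
      fix w
      have "inf ?a (inf (inf (D w) (e w1 w)) (e w2 w)) = inf (D w)
          (inf (inf (way_below imp e w1 u1) (e w1 w)) (inf (way_below imp e w2 u2) (e w2 w)))"
        by (simp add: inf_aci)
      also have "\<dots> \<le> inf (D w) (inf (way_below imp e w u1) (way_below imp e w u2))"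
        by (intro inf_mono order_refl way_below_mono[OF L_order])
      also have "\<dots> \<le> ?R"
        by (rule inf_way_below_le_SUP_way_below_union)
      finally show "inf ?a (inf (inf (D w) (e w1 w)) (e w2 w)) \<le> ?R" .
    qed
    finally show "inf (inf (D w1) (way_below imp e w1 u1)) (inf (D w2) (way_below imp e w2 u2))
        \<le> ?R" .
  qed
qed

lemma Lsup_way_below_union:
  assumes "is_Lsup imp e D s"
  shows "is_Lsup imp e (way_below_union D) s"
  unfolding is_Lsup_iff
proof (intro allI)
  fix y c
  have "c \<le> e s y \<longleftrightarrow> (\<forall>w. inf c (D w) \<le> e w y)"
    using assms by (rule le_Lsup_iff)
  also have "\<dots> \<longleftrightarrow> (\<forall>w u. inf (inf c (D w)) (way_below imp e w u) \<le> e u y)"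
    using le_Lsup_iff[OF Lsup_way_below] by blast
  also have "\<dots> \<longleftrightarrow> (\<forall>u. inf c (way_below_union D u) \<le> e u y)"
    unfolding way_below_union_def inf_SUP_le_iff by (auto simp: inf_assoc)
  finally show "c \<le> e s y \<longleftrightarrow> (\<forall>u. inf c (way_below_union D u) \<le> e u y)" .
qed

lemma way_below_scott_open: "(\<lambda>w. way_below imp e w z) \<in> scottL imp e"
  unfolding scottL_def
proof (intro CollectI conjI allI impI)
  show "upper_setL e (\<lambda>w. way_below imp e w z)"
    unfolding upper_setL_def using way_below_mono[OF L_order] by blast
  fix D s
  assume Ds: "directedL e D \<and> is_Lsup imp e D s"
  show "way_below imp e s z = (SUP x. inf (way_below imp e x z) (D x))"
  proof (rule order.antisym)
    have "idealL e (way_below_union D)"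
      using Ds by (simp add: idealL_def directedL_way_below_union lower_setL_way_below_union)
    moreover have "is_Lsup imp e (way_below_union D) s"
      using Ds by (simp add: Lsup_way_below_union)
    ultimately have "inf (way_below imp e s z) (e s s) \<le> way_below_union D z"
      by (rule way_below_le_ideal)
    then show "way_below imp e s z \<le> (SUP x. inf (way_below imp e x z) (D x))"
      using L_order by (simp add: L_order_def way_below_union_def inf_commute)
  next
    have "inf (way_below imp e x z) (D x) \<le> way_below imp e s z" for x
    proof -
      have "D x \<le> e x s"
        using Ds L_order by (simp add: L_order_def Lsup_upper)
      then have "inf (way_below imp e x z) (D x) \<le> inf (way_below imp e x z) (e x s)"
        by (rule inf_mono[OF order_refl])
      also have "\<dots> \<le> way_below imp e s z"
        by (rule way_below_mono[OF L_order])
      finally show ?thesis .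
    qed
    then show "(SUP x. inf (way_below imp e x z) (D x)) \<le> way_below imp e s z"
      by (rule SUP_least)
  qed
qed

theorem spec_order_scottL: "spec_order imp (scottL imp e) = e"
proof (intro ext order.antisym)
  fix x y
  let ?c = "spec_order imp (scottL imp e) x y"
  have "inf ?c (way_below imp e x z) \<le> e z y" for z
  proof -
    have "inf ?c (way_below imp e x z) \<le> way_below imp e y z"
      using open_spec_order_upper[OF way_below_scott_open[of z], of x y] by (simp add: inf_commute)
    then show ?thesis
      using way_below_le[OF L_order] order_trans by blast
  qed
  then show "?c \<le> e x y"
    using le_Lsup_iff[OF Lsup_way_below] by blast
  show "e x y \<le> ?c"
    by (rule le_spec_order_scottL)
qed

end

theorem theorem4p7:
  fixes imp :: "'l::complete_lattice \<Rightarrow> 'l \<Rightarrow> 'l"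
    and T :: "('a \<Rightarrow> 'l) set"
    and e :: "'b \<Rightarrow> 'b \<Rightarrow> 'l"
  assumes "is_frame_impl imp"
  shows "(Ltopology T \<and> locally_super_compact imp T \<and> L_sober T
            \<longrightarrow> scottL imp (spec_order imp T) = T)
       \<and> (continuous_L_dcpo imp e \<longrightarrow> spec_order imp (scottL imp e) = e)"
proof (intro conjI impI)
  assume "Ltopology T \<and> locally_super_compact imp T \<and> L_sober T"
  then interpret lsc_sober_space imp T
    using assms by unfold_locales simp_all
  show "scottL imp (spec_order imp T) = T"
    by (rule scottL_spec_order)
next
  assume "continuous_L_dcpo imp e"
  then interpret continuous_Ldcpo imp e
    using assms by unfold_locales
  show "spec_order imp (scottL imp e) = e"
    by (rule spec_order_scottL)
qed

end
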